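(* For every feasible basis $B$ of a system $Ax=b$, $x\in\mathbb{R}^d_{\geq 0}$ that satisfies the dominance condition, the submatrix $\hat A_B$ (columns of the normalized matrix $\hat A$ indexed by $B$) covers a permutation matrix.
   Context: $A\in\mathbb{R}^{n\times d}_{\geq 0}$ has a nonzero entry in each column and $b>0$. A feasible basis is $B\subset[d]$ with $A_B$ square nonsingular and the unique solution of $Ax=b$ supported in $B$ nonnegative. The normalized matrix is $\hat A=(\operatorname{diag} b)^{-1}A(\operatorname{diag} u)^{-1}$, where $u_j$ is the largest entry of the $j$th column of $(\operatorname{diag} b)^{-1}A$; it has entries in $[0,1]$ and a $1$-entry in each column. A matrix covers another if their difference is entrywise nonnegative. The system satisfies the dominance condition if $\hat A$ satisfies (a) some $n\times n$ submatrix covers a permutation matrix, and (b) every $n\times n$ submatrix covering a permutation matrix has all row sums less than $2$. *)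

theory Defs
  imports "HOL-Analysis.Analysis"
begin

text \<open>Rows of A are indexed by the finite type 'n (n = CARD('n)),
columns by the finite type 'd (d = CARD('d)).\<close>

definition col_scale :: "real^'d^'n \<Rightarrow> real^'n \<Rightarrow> 'd \<Rightarrow> real" where
  "col_scale A b j = Max (range (\<lambda>i. A $ i $ j / b $ i))"

definition normalized :: "real^'d^'n \<Rightarrow> real^'n \<Rightarrow> real^'d^'n" where
  "normalized A b = (\<chi> i j. A $ i $ j / b $ i / col_scale A b j)"

definition covers_perm :: "real^'d^'n \<Rightarrow> 'd set \<Rightarrow> bool" where
  "covers_perm M S \<longleftrightarrow> (\<exists>p. bij_betw p (UNIV :: 'n set) S \<and>
     (\<forall>i. \<forall>j\<in>S. (if j = p i then 1 else 0) \<le> M $ i $ j))"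

definition dominance :: "real^'d^'n \<Rightarrow> real^'n \<Rightarrow> bool" where
  "dominance A b \<longleftrightarrow>
     (\<exists>S. card S = CARD('n) \<and> covers_perm (normalized A b) S) \<and>
     (\<forall>S. card S = CARD('n) \<and> covers_perm (normalized A b) S \<longrightarrow>
          (\<forall>i. (\<Sum>j\<in>S. normalized A b $ i $ j) < 2))"

definition feasible_basis :: "real^'d^'n \<Rightarrow> real^'n \<Rightarrow> 'd set \<Rightarrow> bool" where
  "feasible_basis A b B \<longleftrightarrow>
     card B = CARD('n) \<and>
     (\<exists>e :: 'n \<Rightarrow> 'd. bij_betw e UNIV B \<and> invertible (\<chi> i k. A $ i $ (e k))) \<and>
     (\<forall>x :: real^'d. (\<forall>j. j \<notin> B \<longrightarrow> x $ j = 0) \<and> A *v x = b \<longrightarrow> (\<forall>j. 0 \<le> x $ j))"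

end

theory Submission
  imports Defs
begin

text \<open>Let M be the normalized matrix. As its entries lie in [0,1], n columns cover a permutation
  matrix iff they carry a transversal of 1-entries, and by dominance every row meets such a
  transversal in exactly one entry 1 while its other entries there sum to less than 1. Hence each
  column j has a unique 1, in row unit_row j. If x is the basic solution of B, then y_j = u_j x_j
  is a nonnegative solution of M_B y = 1. If some row k were missed by unit_row on B, choose in
  every fibre of unit_row on B a column maximising row k of M; completed by a 1 in row k these
  columns form a transversal, so their entries in row k sum to less than 1, whereas row k of
  M_B y = 1 together with fibre masses at most 1 forces this sum to be at least 1. So unit_row maps
  B bijectively onto the rows, and its inverse is the permutation covered by M_B.\<close>

lemma col_scale_ge: "A $ i $ j / b $ i \<le> col_scale A b j"
  unfolding col_scale_def by (rule Max_ge) auto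

lemma col_scale_attained: "\<exists>i. col_scale A b j = A $ i $ j / b $ i"
proof -
  have "col_scale A b j \<in> range (\<lambda>i. A $ i $ j / b $ i)"
    unfolding col_scale_def by (rule Max_in) auto
  then show ?thesis by auto
qed

lemma col_scale_pos:
  assumes "\<forall>i j. 0 \<le> A $ i $ j" "\<forall>i. 0 < b $ i" "A $ i $ j \<noteq> 0"
  shows "0 < col_scale A b j"
proof -
  have "0 < A $ i $ j / b $ i"
    using assms by (simp add: order_less_le)
  also have "\<dots> \<le> col_scale A b j"
    by (rule col_scale_ge)
  finally show ?thesis .
qed

lemma normalized_nth: "normalized A b $ i $ j = (A $ i $ j / b $ i) / col_scale A b j"
  unfolding normalized_def by simp

lemma normalized_nonneg:
  assumes "\<forall>i j. 0 \<le> A $ i $ j" "\<forall>i. 0 < b $ i"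
  shows "0 \<le> normalized A b $ i $ j"
proof -
  have "0 \<le> A $ i $ j / b $ i"
    using assms by (simp add: less_imp_le)
  moreover have "0 \<le> col_scale A b j"
    using calculation col_scale_ge order_trans by blast
  ultimately show ?thesis
    unfolding normalized_nth by (rule divide_nonneg_nonneg)
qed

lemma normalized_le_one:
  assumes "\<forall>i j. 0 \<le> A $ i $ j" "\<forall>i. 0 < b $ i"
  shows "normalized A b $ i $ j \<le> 1"
proof -
  have "0 \<le> A $ i $ j / b $ i"
    using assms by (simp add: less_imp_le)
  then show ?thesis
    using col_scale_ge[of A i j b] unfolding normalized_nth divide_le_eq_1 by linarith
qed

lemma normalized_col_has_one:
  assumes "\<forall>i j. 0 \<le> A $ i $ j" "\<forall>i. 0 < b $ i" "\<exists>i. A $ i $ j \<noteq> 0"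
  shows "\<exists>i. normalized A b $ i $ j = 1"
proof -
  have "col_scale A b j \<noteq> 0"
    using assms col_scale_pos by fastforce
  moreover obtain i where "col_scale A b j = A $ i $ j / b $ i"
    using col_scale_attained by blast
  ultimately have "normalized A b $ i $ j = 1"
    unfolding normalized_nth by simp
  then show ?thesis ..
qed

lemma normalized_row_sum_scaled_solution:
  assumes "\<forall>j. 0 < col_scale A b j" "0 < b $ i"
    and "A *v x = b" "\<forall>j. j \<notin> B \<longrightarrow> x $ j = 0"
  shows "(\<Sum>j\<in>B. normalized A b $ i $ j * (col_scale A b j * x $ j)) = 1"
proof -
  have "(\<Sum>j\<in>B. normalized A b $ i $ j * (col_scale A b j * x $ j))
      = (\<Sum>j\<in>UNIV. normalized A b $ i $ j * (col_scale A b j * x $ j))"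
    using assms(4) by (intro sum.mono_neutral_left) auto
  also have "\<dots> = (A *v x) $ i / b $ i"
    using assms(1) unfolding normalized_def matrix_vector_mult_def
    by (simp add: sum_divide_distrib order_less_imp_not_eq2)
  also have "\<dots> = 1"
    using assms(2,3) by simp
  finally show ?thesis .
qed

lemma solution_supported_on_range:
  fixes A :: "real^'d^'n" and e :: "'m::finite \<Rightarrow> 'd"
  assumes "(\<chi> i k. A $ i $ e k) *v z = b"
  shows "\<exists>x. (\<forall>j. j \<notin> range e \<longrightarrow> x $ j = 0) \<and> A *v x = b"
proof -
  define x :: "real^'d" where "x = (\<chi> j. \<Sum>k\<in>{k. e k = j}. z $ k)"
  have "x $ j = 0" if "j \<notin> range e" for j
  proof -
    have "{k. e k = j} = {}"
      using that by auto
    then show ?thesis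
      unfolding x_def by simp
  qed
  moreover have "(A *v x) $ i = b $ i" for i
  proof -
    have "(A *v x) $ i = (\<Sum>j\<in>UNIV. \<Sum>k\<in>{k. e k = j}. A $ i $ e k * z $ k)"
      unfolding matrix_vector_mult_def x_def by (simp add: sum_distrib_left)
    also have "\<dots> = (\<Sum>k\<in>UNIV. A $ i $ e k * z $ k)"
      using sum.group[of UNIV UNIV e "\<lambda>k. A $ i $ e k * z $ k"] by simp
    also have "\<dots> = b $ i"
      using assms by (simp add: matrix_vector_mult_def vec_eq_iff)
    finally show ?thesis .
  qed
  ultimately show ?thesis
    by (metis vec_eq_iff)
qed

lemma feasible_basis_basic_solution:
  fixes A :: "real^'d^'n" and B :: "'d set"
  assumes "feasible_basis A b B"
  shows "\<exists>x. (\<forall>j. j \<notin> B \<longrightarrow> x $ j = 0) \<and> A *v x = b \<and> (\<forall>j. 0 \<le> x $ j)"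
proof -
  obtain e :: "'n \<Rightarrow> 'd" where e: "bij_betw e UNIV B"
    and inv: "invertible (\<chi> i k. A $ i $ e k)"
    using assms unfolding feasible_basis_def by blast
  obtain C' where "(\<chi> i k. A $ i $ e k) ** C' = mat 1"
    using inv unfolding invertible_def by blast
  then have "(\<chi> i k. A $ i $ e k) *v (C' *v b) = b"
    by (simp add: matrix_vector_mul_assoc)
  moreover have "range e = B"
    using e by (simp add: bij_betw_def)
  ultimately obtain x where "(\<forall>j. j \<notin> B \<longrightarrow> x $ j = 0) \<and> A *v x = b"
    using solution_supported_on_range by blast
  with assms show ?thesis
    unfolding feasible_basis_def by blast
qed

lemma covers_perm_iff_unit_diagonal:
  fixes M :: "real^'d^'n"
  assumes "\<forall>i j. 0 \<le> M $ i $ j" "\<forall>i j. M $ i $ j \<le> 1"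
  shows "covers_perm M S \<longleftrightarrow> (\<exists>p. bij_betw p UNIV S \<and> (\<forall>i. M $ i $ p i = 1))"
proof
  assume "covers_perm M S"
  then obtain p where p: "bij_betw p UNIV S"
    and cov: "\<forall>i. \<forall>j\<in>S. (if j = p i then 1 else 0) \<le> M $ i $ j"
    unfolding covers_perm_def by blast
  have "1 \<le> M $ i $ p i" for i
  proof -
    have "(if p i = p i then 1 else 0) \<le> M $ i $ p i"
      using cov bij_betwE[OF p] by blast
    then show ?thesis by simp
  qed
  then have "M $ i $ p i = 1" for i
    using assms(2) by (meson order_antisym)
  with p show "\<exists>p. bij_betw p UNIV S \<and> (\<forall>i. M $ i $ p i = 1)"
    by blast
next
  assume "\<exists>p. bij_betw p UNIV S \<and> (\<forall>i. M $ i $ p i = 1)"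
  with assms(1) show "covers_perm M S"
    unfolding covers_perm_def by auto
qed

lemma finite_ex_max_on:
  fixes f :: "'a \<Rightarrow> 'b::linorder"
  assumes "finite S" "S \<noteq> {}"
  shows "\<exists>x\<in>S. \<forall>y\<in>S. f y \<le> f x"
proof -
  have "Max (f ` S) \<in> f ` S"
    using assms by simp
  then obtain x where x: "x \<in> S" "f x = Max (f ` S)"
    by auto
  have "\<forall>y\<in>S. f y \<le> f x"
    unfolding x(2) using assms(1) by simp
  with x(1) show ?thesis ..
qed

locale dominant_matrix =
  fixes M :: "real^'d^'n"
  assumes nonneg: "0 \<le> M $ i $ j"
    and le_one: "M $ i $ j \<le> 1"
    and col_has_one: "\<exists>i. M $ i $ j = 1"
    and unit_transversal_ex: "\<exists>q. inj q \<and> (\<forall>i. M $ i $ q i = 1)"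
    and unit_transversal_row_sum: "inj q \<Longrightarrow> \<forall>i. M $ i $ q i = 1 \<Longrightarrow> (\<Sum>i\<in>UNIV. M $ k $ q i) < 2"
begin

lemma unit_transversal_off_diagonal:
  assumes "inj q" "\<forall>i. M $ i $ q i = 1" "M $ k $ q c = 1"
  shows "c = k"
proof (rule ccontr)
  assume "c \<noteq> k"
  then have "M $ k $ q k + M $ k $ q c \<le> (\<Sum>i\<in>UNIV. M $ k $ q i)"
    using sum_mono2[of UNIV "{k, c}" "\<lambda>i. M $ k $ q i"] nonneg by simp
  with assms show False
    using unit_transversal_row_sum[of q k] by simp
qed

lemma col_one_unique:
  assumes "M $ i $ j = 1" "M $ i' $ j = 1"
  shows "i = i'"
proof -
  obtain q where q: "inj q" "\<forall>l. M $ l $ q l = 1"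
    using unit_transversal_ex by blast
  show ?thesis
  proof (cases "j \<in> range q")
    case True
    then obtain m where "j = q m"
      by blast
    then have "M $ i $ q m = 1" "M $ i' $ q m = 1"
      using assms by simp_all
    then have "m = i" "m = i'"
      by (auto intro: unit_transversal_off_diagonal[OF q])
    then show ?thesis
      by simp
  next
    case False
    then have "inj (q(i := j))"
      using q(1) by (simp add: inj_on_fun_updI)
    moreover have "\<forall>l. M $ l $ (q(i := j)) l = 1"
      using q(2) assms(1) by simp
    ultimately show ?thesis
      using unit_transversal_off_diagonal[of "q(i := j)" i' i] assms(2) by simp
  qed
qed

definition unit_row :: "'d \<Rightarrow> 'n" where
  "unit_row j = (THE i. M $ i $ j = 1)"

lemma unit_row_entry: "M $ unit_row j $ j = 1"
proof -
  have "\<exists>!i. M $ i $ j = 1"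
    using col_has_one col_one_unique by blast
  then show ?thesis
    unfolding unit_row_def by (rule theI')
qed

lemma unit_row_eq: "M $ i $ j = 1 \<Longrightarrow> unit_row j = i"
  by (rule col_one_unique[OF unit_row_entry])

lemma row_has_one: "\<exists>j. M $ i $ j = 1"
  using unit_transversal_ex by blast

lemma unit_diagonal_imp_inj:
  assumes "\<forall>i. M $ i $ q i = 1"
  shows "inj q"
proof (rule injI)
  fix a c
  assume "q a = q c"
  then have "unit_row (q a) = unit_row (q c)"
    by simp
  then show "a = c"
    using unit_row_eq[OF assms[rule_format, of a]] unit_row_eq[OF assms[rule_format, of c]] by simp
qed

lemma partial_unit_transversal_row_sum:
  assumes "\<forall>i\<in>I. M $ i $ f i = 1" "k \<notin> I"
  shows "(\<Sum>i\<in>I. M $ k $ f i) < 1"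
proof -
  define q where "q i = (if i \<in> I then f i else (SOME j. M $ i $ j = 1))" for i
  have q: "\<forall>i. M $ i $ q i = 1"
    using assms(1) someI_ex[OF row_has_one] unfolding q_def by simp
  have "(\<Sum>i\<in>I. M $ k $ q i) = (\<Sum>i\<in>I. M $ k $ f i)"
    by (simp add: q_def)
  then have "1 + (\<Sum>i\<in>I. M $ k $ f i) = (\<Sum>i\<in>insert k I. M $ k $ q i)"
    using assms(2) q by simp
  also have "\<dots> \<le> (\<Sum>i\<in>UNIV. M $ k $ q i)"
    using nonneg by (intro sum_mono2) auto
  also have "\<dots> < 2"
    using unit_transversal_row_sum unit_diagonal_imp_inj q by blast
  finally show ?thesis by simp
qed

lemma sum_unit_row_fibre_le_one:
  assumes "\<forall>j\<in>B. 0 \<le> y j" "(\<Sum>j\<in>B. M $ i $ j * y j) = 1"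
  shows "(\<Sum>j\<in>{j\<in>B. unit_row j = i}. y j) \<le> 1"
proof -
  have "(\<Sum>j\<in>{j\<in>B. unit_row j = i}. y j) = (\<Sum>j\<in>{j\<in>B. unit_row j = i}. M $ i $ j * y j)"
    using unit_row_entry by (intro sum.cong) auto
  also have "\<dots> \<le> (\<Sum>j\<in>B. M $ i $ j * y j)"
    using assms(1) nonneg by (intro sum_mono2) auto
  finally show ?thesis
    using assms(2) by simp
qed

lemma unit_row_image_eq_UNIV:
  assumes y_nonneg: "\<forall>j\<in>B. 0 \<le> y j" and rows: "\<forall>i. (\<Sum>j\<in>B. M $ i $ j * y j) = 1"
  shows "unit_row ` B = UNIV"
proof (rule ccontr)
  assume "unit_row ` B \<noteq> UNIV"
  then obtain k where k: "k \<notin> unit_row ` B" by blast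
  define C where "C i = {j\<in>B. unit_row j = i}" for i
  have "\<forall>i\<in>unit_row ` B. \<exists>j. j \<in> C i \<and> (\<forall>j'\<in>C i. M $ k $ j' \<le> M $ k $ j)"
  proof
    fix i assume "i \<in> unit_row ` B"
    then have "C i \<noteq> {}"
      unfolding C_def by blast
    then show "\<exists>j. j \<in> C i \<and> (\<forall>j'\<in>C i. M $ k $ j' \<le> M $ k $ j)"
      using finite_ex_max_on[OF finite] by blast
  qed
  from bchoice[OF this] obtain f
    where f: "\<forall>i\<in>unit_row ` B. f i \<in> C i \<and> (\<forall>j\<in>C i. M $ k $ j \<le> M $ k $ f i)"
    by blast
  have "1 = (\<Sum>j\<in>B. M $ k $ j * y j)"
    using rows by simp
  also have "\<dots> = (\<Sum>i\<in>unit_row ` B. \<Sum>j\<in>C i. M $ k $ j * y j)"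
    unfolding C_def by (rule sum.image_gen) simp
  also have "\<dots> \<le> (\<Sum>i\<in>unit_row ` B. M $ k $ f i * (\<Sum>j\<in>C i. y j))"
    unfolding sum_distrib_left using f y_nonneg
    by (intro sum_mono mult_right_mono) (auto simp: C_def)
  also have "\<dots> \<le> (\<Sum>i\<in>unit_row ` B. M $ k $ f i)"
    using sum_unit_row_fibre_le_one[OF y_nonneg rows[rule_format]] nonneg
    by (intro sum_mono mult_left_le) (auto simp: C_def)
  also have "\<dots> < 1"
  proof (rule partial_unit_transversal_row_sum[OF _ k], rule ballI)
    fix i assume "i \<in> unit_row ` B"
    then have "f i \<in> C i"
      using f by blast
    then have "unit_row (f i) = i"
      by (simp add: C_def)
    then show "M $ i $ f i = 1"
      using unit_row_entry[of "f i"] by simp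
  qed
  finally show False by simp
qed

lemma covers_perm_if_solves_ones:
  assumes "card B = CARD('n)"
    and "\<forall>j\<in>B. 0 \<le> y j" "\<forall>i. (\<Sum>j\<in>B. M $ i $ j * y j) = 1"
  shows "covers_perm M B"
proof -
  have onto: "unit_row ` B = UNIV"
    using assms(2,3) by (rule unit_row_image_eq_UNIV)
  then have "bij_betw unit_row B UNIV"
    using assms(1) by (simp add: bij_betw_def eq_card_imp_inj_on)
  then have "bij_betw (the_inv_into B unit_row) UNIV B"
    by (rule bij_betw_the_inv_into)
  moreover have "M $ i $ the_inv_into B unit_row i = 1" for i
  proof -
    have "unit_row (the_inv_into B unit_row i) = i"
      using \<open>bij_betw unit_row B UNIV\<close> onto by (simp add: bij_betw_def f_the_inv_into_f)
    then show ?thesis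
      using unit_row_entry[of "the_inv_into B unit_row i"] by simp
  qed
  ultimately show ?thesis
    using covers_perm_iff_unit_diagonal nonneg le_one by blast
qed

end

lemma dominance_imp_dominant_matrix:
  fixes A :: "real^'d^'n"
  assumes nonneg: "\<forall>i j. 0 \<le> A $ i $ j"
    and col_nonzero: "\<forall>j. \<exists>i. A $ i $ j \<noteq> 0"
    and b_pos: "\<forall>i. 0 < b $ i"
    and dom: "dominance A b"
  shows "dominant_matrix (normalized A b)"
proof
  let ?M = "normalized A b"
  have bounds: "\<forall>i j. 0 \<le> ?M $ i $ j" "\<forall>i j. ?M $ i $ j \<le> 1"
    using normalized_nonneg normalized_le_one nonneg b_pos by blast+
  then show "0 \<le> ?M $ i $ j" "?M $ i $ j \<le> 1" for i j
    by blast+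
  show "\<exists>i. ?M $ i $ j = 1" for j
    using normalized_col_has_one nonneg b_pos col_nonzero by blast
  show "\<exists>q. inj q \<and> (\<forall>i. ?M $ i $ q i = 1)"
  proof -
    obtain S where "covers_perm ?M S"
      using dom unfolding dominance_def by blast
    then show ?thesis
      using covers_perm_iff_unit_diagonal[OF bounds] bij_betw_imp_inj_on by blast
  qed
  show "(\<Sum>i\<in>UNIV. ?M $ k $ q i) < 2" if "inj q" "\<forall>i. ?M $ i $ q i = 1" for q :: "'n \<Rightarrow> 'd" and k
  proof -
    have "covers_perm ?M (range q)"
      using that covers_perm_iff_unit_diagonal[OF bounds] inj_on_imp_bij_betw by blast
    moreover have "card (range q) = CARD('n)"
      using that(1) by (simp add: card_image)
    ultimately have "(\<Sum>j\<in>range q. ?M $ k $ j) < 2"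
      using dom unfolding dominance_def by blast
    with that(1) show ?thesis
      by (simp add: sum.reindex)
  qed
qed

theorem lemma4p8:
  fixes A :: "real^'d^'n" and b :: "real^'n" and B :: "'d set"
  assumes nonneg: "\<forall>i j. 0 \<le> A $ i $ j"
    and col_nonzero: "\<forall>j. \<exists>i. A $ i $ j \<noteq> 0"
    and b_pos: "\<forall>i. 0 < b $ i"
    and dom: "dominance A b"
    and fb: "feasible_basis A b B"
  shows "covers_perm (normalized A b) B"
proof -
  interpret N: dominant_matrix "normalized A b"
    using dominance_imp_dominant_matrix[OF nonneg col_nonzero b_pos dom] .
  obtain x where x_supp: "\<forall>j. j \<notin> B \<longrightarrow> x $ j = 0" and Ax: "A *v x = b"
    and x_nonneg: "\<forall>j. 0 \<le> x $ j"
    using feasible_basis_basic_solution[OF fb] by blast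
  have u_pos: "\<forall>j. 0 < col_scale A b j"
    using col_nonzero col_scale_pos[OF nonneg b_pos] by blast
  have "card B = CARD('n)"
    using fb unfolding feasible_basis_def by blast
  moreover have "\<forall>j\<in>B. 0 \<le> col_scale A b j * x $ j"
    using u_pos x_nonneg by (simp add: less_imp_le)
  moreover have "\<forall>i. (\<Sum>j\<in>B. normalized A b $ i $ j * (col_scale A b j * x $ j)) = 1"
    using normalized_row_sum_scaled_solution[OF u_pos _ Ax x_supp] b_pos by blast
  ultimately show ?thesis
    by (rule N.covers_perm_if_solves_ones)
qed

end
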